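(* Let $f:[0,\infty)\to\mathbb{R}$ be differentiable, let $0<a<b<\infty$, and suppose $f'$ is Lebesgue integrable on $[a,b]$. Let $m\in(0,1]$ and $q\ge1$, and suppose $|f'|^q$ is $(1,m)$-GA-convex on $[0,\max\{a^{1/m},b\}]$. Then \[ \biggl|\frac{b^2f(b)-a^2f(a)}{2}-\int_a^b xf(x)\,dx\biggr|\le\frac{(b^3-a^3)^{1-1/q}}{6}\Bigl\{m\bigl[L(a^3,b^3)-a^3\bigr]\bigl|f'(a^{1/m})\bigr|^q+\bigl[b^3-L(a^3,b^3)\bigr]|f'(b)|^q\Bigr\}^{1/q}. \]
   Context: For $c>0$, $h:[0,c]\to\mathbb{R}$ and $(\alpha,m)\in(0,1]^2$, $h$ is called $(\alpha,m)$-GA-convex on $[0,c]$ if $h\bigl(x^\lambda y^{m(1-\lambda)}\bigr)\le\lambda^\alpha h(x)+m(1-\lambda^\alpha)h(y)$ for all $x,y\in[0,c]$ and all $\lambda\in[0,1]$ (with the convention $0^0=1$). For $x,y>0$, $x\neq y$, the logarithmic mean is $L(x,y)=\frac{y-x}{\ln y-\ln x}$. *)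

theory Defs
  imports "HOL-Analysis.Analysis"
begin

text \<open>Real power with the convention 0^0 = 1 (Isabelle's powr has 0 powr 0 = 0).\<close>
definition gpow :: "real \<Rightarrow> real \<Rightarrow> real" where
  "gpow x t = (if t = 0 then 1 else x powr t)"

definition GA_convex :: "real \<Rightarrow> real \<Rightarrow> real \<Rightarrow> (real \<Rightarrow> real) \<Rightarrow> bool" where
  "GA_convex \<alpha> m c h \<longleftrightarrow>
     (\<forall>x\<in>{0..c}. \<forall>y\<in>{0..c}. \<forall>t\<in>{0..1}.
        h (gpow x t * gpow y (m * (1 - t))) \<le> gpow t \<alpha> * h x + m * (1 - gpow t \<alpha>) * h y)"

definition logmean :: "real \<Rightarrow> real \<Rightarrow> real" where
  "logmean x y = (y - x) / (ln y - ln x)"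

end

theory Submission
  imports Defs
begin

text \<open>
  Integrating by parts turns the left-hand side into \<open>\<bar>\<integral> x^2 f' x\<bar> / 2\<close> over \<open>[a, b]\<close>.
  Every \<open>x \<in> [a, b]\<close> is the geometric combination \<open>b^t (a^(1/m))^(m (1 - t))\<close> with
  \<open>t = (ln x - ln a) / (ln b - ln a)\<close>, so GA-convexity bounds \<open>\<bar>f' x\<bar>^q\<close> by a function
  affine in \<open>ln x\<close>; integrated against \<open>x^2\<close> it produces the logarithmic mean of
  \<open>a^3\<close> and \<open>b^3\<close>. The power-mean inequality with weight \<open>x^2\<close> combines the two; it
  follows from the tangent-line bound \<open>q c^(q-1) u \<le> u^q + (q - 1) c^q\<close> at the
  optimal point \<open>c\<close>.
\<close>

lemma powr_tangent_line_le:
  fixes u c q :: real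
  assumes "u \<ge> 0" "c > 0" "q \<ge> 1"
  shows "q * c powr (q - 1) * u \<le> u powr q + (q - 1) * c powr q"
proof (cases "q = 1")
  case True
  then show ?thesis using assms by simp
next
  case False
  then have q1: "q > 1" using assms by simp
  have "u * c powr (q - 1) \<le> u powr q / q + (c powr (q - 1)) powr (q / (q - 1)) / (q / (q - 1))"
    by (rule Youngs_inequality) (use q1 assms in \<open>auto simp: field_simps\<close>)
  also have "(c powr (q - 1)) powr (q / (q - 1)) = c powr q"
    using q1 by (simp add: powr_powr)
  finally have "q * (u * c powr (q - 1)) \<le> q * (u powr q / q + c powr q * (q - 1) / q)"
    using q1 by (intro mult_left_mono) (auto simp: field_simps)
  also have "\<dots> = u powr q + (q - 1) * c powr q"
    using q1 by (simp add: field_simps)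
  finally show ?thesis by (simp add: mult_ac)
qed

lemma tangent_line_bound_at_optimum:
  fixes R W q :: real
  assumes "R > 0" "W > 0" "q \<ge> 1"
  defines "c \<equiv> (R / W) powr (1 / q)"
  shows "(R + (q - 1) * c powr q * W) / (q * c powr (q - 1)) = W powr (1 - 1/q) * R powr (1/q)"
proof -
  have "c powr q = R / W" using assms by (simp add: c_def powr_powr)
  then have "R + (q - 1) * c powr q * W = q * R" using assms by (simp add: field_simps)
  moreover have "c powr (q - 1) = R powr (1 - 1/q) / W powr (1 - 1/q)"
    using assms by (simp add: c_def powr_powr powr_divide field_simps)
  moreover have "R / R powr (1 - 1/q) = R powr (1/q)"
    using assms by (simp add: powr_diff)
  ultimately show ?thesis
    using assms by (simp add: field_simps)
qed

lemma weighted_power_mean_integral_le: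
  fixes w g h :: "'a::euclidean_space \<Rightarrow> real"
  assumes w: "(w has_integral W) S" "W > 0" "\<And>x. x \<in> S \<Longrightarrow> w x \<ge> 0"
    and wh: "((\<lambda>x. w x * h x) has_integral R) S"
    and wg: "(\<lambda>x. w x * g x) integrable_on S"
    and gh: "\<And>x. x \<in> S \<Longrightarrow> \<bar>g x\<bar> powr q \<le> h x"
    and q: "q \<ge> 1"
  shows "\<bar>integral S (\<lambda>x. w x * g x)\<bar> \<le> W powr (1 - 1/q) * R powr (1/q)"
proof -
  define X where "X = \<bar>integral S (\<lambda>x. w x * g x)\<bar>"
  have bound: "X \<le> (R + (q - 1) * c powr q * W) / (q * c powr (q - 1))" if c: "c > 0" for c
  proof -
    define K where "K = q * c powr (q - 1)"
    define C where "C = (q - 1) * c powr q"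
    have K: "K > 0" using q c by (simp add: K_def)
    have majorant: "((\<lambda>x. (w x * h x + C * w x) / K) has_integral ((R + C * W) / K)) S"
      using has_integral_add[OF wh has_integral_cmul[OF w(1), of C]]
      by (intro has_integral_divide) simp
    have "X \<le> integral S (\<lambda>x. (w x * h x + C * w x) / K)"
      unfolding X_def real_norm_def[symmetric]
    proof (rule integral_norm_bound_integral[OF wg])
      show "(\<lambda>x. (w x * h x + C * w x) / K) integrable_on S"
        using majorant by blast
    next
      fix x assume x: "x \<in> S"
      have "K * \<bar>g x\<bar> \<le> h x + C"
        using powr_tangent_line_le[of "\<bar>g x\<bar>" c q] gh[OF x] c q by (simp add: K_def C_def)
      then have "w x * (K * \<bar>g x\<bar>) \<le> w x * (h x + C)"
        using w(3)[OF x] by (rule mult_left_mono)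
      then show "norm (w x * g x) \<le> (w x * h x + C * w x) / K"
        using K w(3)[OF x] by (simp add: abs_mult field_simps)
    qed
    also have "\<dots> = (R + C * W) / K"
      using majorant by (rule integral_unique)
    finally show ?thesis by (simp add: K_def C_def mult_ac)
  qed
  have "R \<ge> 0"
    using has_integral_nonneg[OF wh] w(3) gh
    by (meson order_trans powr_ge_zero mult_nonneg_nonneg)
  then consider "R > 0" | "R = 0" by linarith
  then show ?thesis
  proof cases
    case 1
    have "(R / W) powr (1 / q) > 0" using 1 w(2) by simp
    from bound[OF this] show ?thesis
      unfolding X_def tangent_line_bound_at_optimum[OF 1 w(2) q] .
  next
    case 2
    text \<open>For \<open>R = 0\<close> the bound is \<open>(1 - 1/q) W c\<close>; taking \<open>c = X/W\<close> forces \<open>X \<le> 0\<close>.\<close>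
    have "X \<le> 0"
    proof (rule ccontr)
      assume "\<not> X \<le> 0"
      define c where "c = X / W"
      have c: "c > 0" using \<open>\<not> X \<le> 0\<close> w(2) by (simp add: c_def)
      have "(R + (q - 1) * c powr q * W) / (q * c powr (q - 1)) = (q - 1) * c * W / q"
        using 2 c q by (simp add: powr_diff field_simps)
      then have "X \<le> (q - 1) * c * W / q"
        using bound[OF c] by simp
      also have "\<dots> = (q - 1) / q * X"
        using w(2) by (simp add: c_def)
      finally show False
        using \<open>\<not> X \<le> 0\<close> q by (simp add: field_simps)
    qed
    then show ?thesis using X_def by simp
  qed
qed

lemma GA_convex_1_le_log_interpolation:
  fixes h :: "real \<Rightarrow> real"
  assumes conv: "GA_convex 1 m c h"
    and ab: "0 < a" "a < b" and m: "0 < m"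
    and c: "b \<le> c" "a powr (1/m) \<le> c"
    and x: "a \<le> x" "x \<le> b"
  shows "h x \<le> (ln x - ln a) / (ln b - ln a) * h b
                + m * (1 - (ln x - ln a) / (ln b - ln a)) * h (a powr (1/m))"
proof -
  define t where "t = (ln x - ln a) / (ln b - ln a)"
  have "ln a \<le> ln x" "ln x \<le> ln b" "ln a < ln b" using ab x by auto
  then have t: "t \<in> {0..1}" by (auto simp: t_def field_simps)
  have "gpow b t * gpow (a powr (1/m)) (m * (1 - t)) = exp (t * ln b + (1 - t) * ln a)"
    using ab m by (simp add: gpow_def powr_powr powr_def exp_add)
  also have "t * ln b + (1 - t) * ln a = ln a + t * (ln b - ln a)"
    by (simp add: algebra_simps)
  also have "t * (ln b - ln a) = ln x - ln a"
    using \<open>ln a < ln b\<close> by (simp add: t_def)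
  finally have "gpow b t * gpow (a powr (1/m)) (m * (1 - t)) = x"
    using ab x by simp
  moreover have "gpow t 1 = t" using t by (simp add: gpow_def)
  moreover have "b \<in> {0..c}" "a powr (1/m) \<in> {0..c}" using ab c by auto
  ultimately show ?thesis
    using conv t unfolding GA_convex_def t_def by metis
qed

lemma has_integral_sq_times_log_ratio:
  fixes a b :: real
  assumes ab: "0 < a" "a < b"
  shows "((\<lambda>x. x^2 * ((ln x - ln a) / (ln b - ln a)))
           has_integral (b^3 - logmean (a^3) (b^3)) / 3) {a..b}"
proof -
  define D where "D = ln b - ln a"
  have D: "D > 0" and "ln b = ln a + D" using ab by (simp_all add: D_def)
  define G where "G x = (x^3 * ln x / 3 - x^3 / 9 - ln a * x^3 / 3) / D" for x
  have "((\<lambda>x. x^2 * ((ln x - ln a) / D)) has_integral (G b - G a)) {a..b}"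
  proof (rule fundamental_theorem_of_calculus)
    fix x assume "x \<in> {a..b}"
    then have "x > 0" using ab by auto
    then have "(G has_real_derivative x^2 * ((ln x - ln a) / D)) (at x within {a..b})"
      unfolding G_def using D
      by (auto intro!: derivative_eq_intros simp: field_simps power2_eq_square power3_eq_cube)
    then show "(G has_vector_derivative x^2 * ((ln x - ln a) / D)) (at x within {a..b})"
      by (simp add: has_real_derivative_iff_has_vector_derivative)
  qed (use ab in simp)
  moreover have "ln (b^3) - ln (a^3) = 3 * D"
    using ab by (simp add: ln_realpow D_def algebra_simps)
  then have "G b - G a = (b^3 - logmean (a^3) (b^3)) / 3"
    using D unfolding G_def logmean_def \<open>ln b = ln a + D\<close>
    by (simp add: field_simps power3_eq_cube)
  ultimately show ?thesis by (simp add: D_def)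
qed

lemma has_integral_sq:
  fixes a b :: real
  assumes "a \<le> b"
  shows "((\<lambda>x. x^2) has_integral (b^3 - a^3) / 3) {a..b}"
proof -
  have "((\<lambda>x. x^2) has_integral ((\<lambda>x. x^3 / 3) b - (\<lambda>x. x^3 / 3) a)) {a..b}"
    by (rule fundamental_theorem_of_calculus)
       (use assms in \<open>auto intro!: derivative_eq_intros
          simp: has_real_derivative_iff_has_vector_derivative[symmetric] power2_eq_square\<close>)
  then show ?thesis by (simp add: diff_divide_distrib)
qed

lemma has_integral_sq_times_log_interpolation:
  fixes a b m u v :: real
  assumes ab: "0 < a" "a < b"
  defines "t \<equiv> \<lambda>x. (ln x - ln a) / (ln b - ln a)"
  shows "((\<lambda>x. x^2 * (t x * v + m * (1 - t x) * u)) has_integral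
           (m * (logmean (a^3) (b^3) - a^3) * u + (b^3 - logmean (a^3) (b^3)) * v) / 3) {a..b}"
proof -
  have log: "((\<lambda>x. x^2 * t x) has_integral (b^3 - logmean (a^3) (b^3)) / 3) {a..b}"
    unfolding t_def by (rule has_integral_sq_times_log_ratio[OF ab])
  have "((\<lambda>x. v * (x^2 * t x) + (m * u) * (x^2 - x^2 * t x)) has_integral
          v * ((b^3 - logmean (a^3) (b^3)) / 3)
          + (m * u) * ((b^3 - a^3) / 3 - (b^3 - logmean (a^3) (b^3)) / 3)) {a..b}"
    using has_integral_cmul[OF log, of v]
      has_integral_cmul[OF has_integral_diff[OF has_integral_sq log], of "m * u"] ab
    by (intro has_integral_add) auto
  then show ?thesis
    by (simp add: algebra_simps add_divide_distrib diff_divide_distrib)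
qed

lemma has_integral_sq_times_deriv:
  fixes f f' :: "real \<Rightarrow> real" and a b :: real
  assumes "a \<le> b"
    and deriv: "\<And>x. x \<in> {a..b} \<Longrightarrow> (f has_real_derivative f' x) (at x within {a..b})"
  shows "((\<lambda>x. x^2 * f' x) has_integral
           b^2 * f b - a^2 * f a - 2 * integral {a..b} (\<lambda>x. x * f x)) {a..b}"
proof -
  have "((\<lambda>x. 2 * (x * f x) + x^2 * f' x) has_integral b^2 * f b - a^2 * f a) {a..b}"
  proof (rule fundamental_theorem_of_calculus[OF \<open>a \<le> b\<close>])
    fix x assume "x \<in> {a..b}"
    then have "((\<lambda>x. x^2 * f x) has_real_derivative 2 * (x * f x) + x^2 * f' x) (at x within {a..b})"
      using deriv by (auto intro!: derivative_eq_intros simp: power2_eq_square)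
    then show "((\<lambda>x. x^2 * f x) has_vector_derivative 2 * (x * f x) + x^2 * f' x) (at x within {a..b})"
      by (simp add: has_real_derivative_iff_has_vector_derivative)
  qed
  moreover have "continuous_on {a..b} f"
    using deriv by (intro DERIV_continuous_on) auto
  then have "(\<lambda>x. x * f x) integrable_on {a..b}"
    by (intro integrable_continuous_interval continuous_intros)
  then have "((\<lambda>x. 2 * (x * f x)) has_integral 2 * integral {a..b} (\<lambda>x. x * f x)) {a..b}"
    by (rule has_integral_mult_right[OF integrable_integral])
  ultimately show ?thesis
    by (auto dest: has_integral_diff)
qed

theorem corollary3p2:
  fixes f f' :: "real \<Rightarrow> real" and a b m q :: real
  assumes deriv: "\<And>x. x \<ge> 0 \<Longrightarrow> (f has_real_derivative f' x) (at x within {0..})"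
    and ab: "0 < a" "a < b"
    and integ: "set_integrable lborel {a..b} f'"
    and m: "0 < m" "m \<le> 1"
    and q: "q \<ge> 1"
    and conv: "GA_convex 1 m (max (a powr (1/m)) b) (\<lambda>x. \<bar>f' x\<bar> powr q)"
  shows "\<bar>(b^2 * f b - a^2 * f a) / 2 - integral {a..b} (\<lambda>x. x * f x)\<bar>
    \<le> (b^3 - a^3) powr (1 - 1/q) / 6 *
       (m * (logmean (a^3) (b^3) - a^3) * \<bar>f' (a powr (1/m))\<bar> powr q
        + (b^3 - logmean (a^3) (b^3)) * \<bar>f' b\<bar> powr q) powr (1/q)"
proof -
  define S where "S = m * (logmean (a^3) (b^3) - a^3) * \<bar>f' (a powr (1/m))\<bar> powr q
                       + (b^3 - logmean (a^3) (b^3)) * \<bar>f' b\<bar> powr q"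
  define H where "H x = (ln x - ln a) / (ln b - ln a) * \<bar>f' b\<bar> powr q
             + m * (1 - (ln x - ln a) / (ln b - ln a)) * \<bar>f' (a powr (1/m))\<bar> powr q" for x
  have by_parts: "((\<lambda>x. x^2 * f' x) has_integral
                    b^2 * f b - a^2 * f a - 2 * integral {a..b} (\<lambda>x. x * f x)) {a..b}"
    using ab by (intro has_integral_sq_times_deriv DERIV_subset[OF deriv]) auto
  have majorant: "((\<lambda>x. x^2 * H x) has_integral S / 3) {a..b}"
    unfolding H_def S_def by (rule has_integral_sq_times_log_interpolation[OF ab])
  have pointwise: "\<bar>f' x\<bar> powr q \<le> H x" if "x \<in> {a..b}" for x
    using GA_convex_1_le_log_interpolation[OF conv ab m(1)] that unfolding H_def by auto
  have "0 \<le> x^2 * H x" if "x \<in> {a..b}" for x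
    using order_trans[OF powr_ge_zero pointwise[OF that]] by simp
  then have "S \<ge> 0"
    using has_integral_nonneg[OF majorant] by simp
  have B: "b^3 - a^3 > 0" using ab by (simp add: power_strict_mono)
  have "\<bar>integral {a..b} (\<lambda>x. x^2 * f' x)\<bar> \<le> ((b^3 - a^3) / 3) powr (1 - 1/q) * (S / 3) powr (1/q)"
    using ab B by (intro weighted_power_mean_integral_le[OF has_integral_sq _ _ majorant _ pointwise q])
                  (auto intro: has_integral_integrable[OF by_parts])
  also have "\<dots> = (b^3 - a^3) powr (1 - 1/q) * S powr (1/q) / (3 powr (1 - 1/q) * 3 powr (1/q))"
    using B \<open>S \<ge> 0\<close> by (simp add: powr_divide)
  also have "3 powr (1 - 1/q) * 3 powr (1/q) = (3::real)"
    by (simp flip: powr_add)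
  finally have "\<bar>integral {a..b} (\<lambda>x. x^2 * f' x)\<bar> / 2 \<le> (b^3 - a^3) powr (1 - 1/q) / 6 * S powr (1/q)"
    by simp
  moreover have "\<bar>(b^2 * f b - a^2 * f a) / 2 - integral {a..b} (\<lambda>x. x * f x)\<bar>
                  = \<bar>integral {a..b} (\<lambda>x. x^2 * f' x)\<bar> / 2"
    unfolding integral_unique[OF by_parts] by (simp add: abs_if field_simps)
  ultimately show ?thesis
    unfolding S_def by simp
qed

end
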